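(* Consider the generalized Pólya urn with two agents, feedback functions $F_1(k)=k^{\beta_1}$ and $F_2(k)=e^{\beta_2k}$ with $\beta_1>1$ and $\beta_2>0$, and initial values $X_1(0),X_2(0)\in\mathbb{N}$. Then $$\mathbb{P}(N_{mon}=n\mid sMon_1)\asymp n^{-\beta_1}\log n\quad\text{as }n\to\infty.$$
   Context: $\mathbb{N}=\{1,2,\dots\}$, $e^{(i)}$ the $i$-th unit vector of $\mathbb{R}^2$. The urn $X(n)\in\mathbb{N}^2$ is a Markov chain with $\mathbb{P}(X(n+1)-X(n)=e^{(i)}\mid X(n))=F_i(X_i(n))/(F_1(X_1(n))+F_2(X_2(n)))$. $sMon_1=\{\exists N\ \forall n\ge N: X_2(n)=X_2(N)\}$. The time of monopoly is $N_{mon}=\min\{n\ge1:\exists i\in\{1,2\}\ \forall m\ge n: X(m)-X(m-1)=e^{(i)}\}$. $x_n\asymp y_n$ means $\limsup x_n/y_n<\infty$ and $\limsup y_n/x_n<\infty$. *)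

theory Defs
  imports "HOL-Probability.Probability" "HOL-Library.Landau_Symbols"
begin

definition urn_step :: "nat \<Rightarrow> nat \<times> nat \<Rightarrow> nat \<times> nat" where
  "urn_step i s = (if i = 1 then (fst s + 1, snd s) else (fst s, snd s + 1))"

definition urn_p :: "(nat \<Rightarrow> real) \<Rightarrow> (nat \<Rightarrow> real) \<Rightarrow> nat \<Rightarrow> nat \<times> nat \<Rightarrow> real" where
  "urn_p F1 F2 i s =
     (if i = 1 then F1 (fst s) else F2 (snd s)) / (F1 (fst s) + F2 (snd s))"

text \<open>X is (a realisation of) the generalized Polya urn with feedback functions F1, F2
  and initial value x0 on the probability space M: X(0) = x0 almost surely and
  X is a Markov chain with the transition probabilities above, expressed through
  the joint law of the path: for every history h(0..n) and i in {1,2},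
  P(X(0..n) = h(0..n), X(n+1) = h(n) + e^(i)) = P(X(0..n) = h(0..n)) * p_i(h(n)).\<close>
definition polya_urn ::
  "'a measure \<Rightarrow> (nat \<Rightarrow> real) \<Rightarrow> (nat \<Rightarrow> real) \<Rightarrow> nat \<times> nat \<Rightarrow> ('a \<Rightarrow> nat \<Rightarrow> nat \<times> nat) \<Rightarrow> bool"
  where
  "polya_urn M F1 F2 x0 X \<longleftrightarrow>
     prob_space M \<and>
     (\<forall>n. (\<lambda>\<omega>. X \<omega> n) \<in> measurable M (count_space UNIV)) \<and>
     (AE \<omega> in M. X \<omega> 0 = x0) \<and>
     (\<forall>n h i. i \<in> {1, 2} \<longrightarrow>
        measure M {\<omega> \<in> space M. (\<forall>k\<le>n. X \<omega> k = h k) \<and> X \<omega> (Suc n) = urn_step i (h n)}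
        = measure M {\<omega> \<in> space M. \<forall>k\<le>n. X \<omega> k = h k} * urn_p F1 F2 i (h n))"

definition sMon1 :: "'a measure \<Rightarrow> ('a \<Rightarrow> nat \<Rightarrow> nat \<times> nat) \<Rightarrow> 'a set" where
  "sMon1 M X = {\<omega> \<in> space M. \<exists>N. \<forall>n\<ge>N. snd (X \<omega> n) = snd (X \<omega> N)}"

definition mono_from :: "('a \<Rightarrow> nat \<Rightarrow> nat \<times> nat) \<Rightarrow> 'a \<Rightarrow> nat \<Rightarrow> nat \<Rightarrow> bool" where
  "mono_from X \<omega> n i \<longleftrightarrow> (\<forall>m\<ge>n. X \<omega> m = urn_step i (X \<omega> (m - 1)))"

text \<open>The event {N_mon = n}, N_mon = min{n \<ge> 1 : \<exists>i\<in>{1,2}. \<forall>m\<ge>n. X(m)-X(m-1) = e^(i)}.\<close>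
definition Nmon_eq :: "'a measure \<Rightarrow> ('a \<Rightarrow> nat \<Rightarrow> nat \<times> nat) \<Rightarrow> nat \<Rightarrow> 'a set" where
  "Nmon_eq M X n = {\<omega> \<in> space M. 1 \<le> n \<and> (\<exists>i\<in>{1,2}. mono_from X \<omega> n i) \<and>
      (\<forall>k. 1 \<le> k \<and> k < n \<longrightarrow> \<not> (\<exists>i\<in>{1,2}. mono_from X \<omega> k i))}"

definition cprob :: "'a measure \<Rightarrow> 'a set \<Rightarrow> 'a set \<Rightarrow> real" where
  "cprob M A B = measure M (A \<inter> B) / measure M B"

end

theory Submission
  imports Defs "HOL-Real_Asymp.Real_Asymp"
begin

text \<open>
  On \<open>sMon\<^sub>1\<close>, the event \<open>N\<^sub>m\<^sub>o\<^sub>n = m + 2\<close> says that the \<open>(m+1)\<close>-st ball is the last one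
  agent 2 receives. Splitting according to the state \<open>X(m) = (a, b)\<close>, \<open>a + b = N\<close>, its
  probability is \<open>\<Sum> P(X(m) = (a,b)) p\<^sub>2(a,b) \<Prod>\<^sub>k p\<^sub>1(a+k, b+1)\<close>. Since \<open>p\<^sub>1 (1/F\<^sub>1 + 1/F\<^sub>2) = 1/F\<^sub>2\<close> and
  \<open>p\<^sub>2 (1/F\<^sub>1 + 1/F\<^sub>2) = 1/F\<^sub>1\<close>, the quantity \<open>P(X(m) = (a,b)) (1/F\<^sub>1(a) + 1/F\<^sub>2(b))\<close> satisfies the
  recursion of a backward walk and is, up to a constant, the probability that this walk reaches
  \<open>X(0)\<close>; as \<open>\<Sum> 1/F\<^sub>1\<close> and \<open>\<Sum> 1/F\<^sub>2\<close> converge, it lies between two positive constants. So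
  the state \<open>(a, b)\<close> contributes about \<open>a\<^sup>-\<^sup>\<beta>\<^sup>1\<close> times the probability that agent 1 wins all
  remaining balls, which is bounded below while \<open>e\<^sup>\<beta>\<^sup>2\<^sup>b \<le> N\<^sup>(\<^sup>\<beta>\<^sup>1\<^sup>-\<^sup>1\<^sup>)\<^sup>/\<^sup>2\<close> and decays geometrically
  in \<open>b\<close> once \<open>e\<^sup>\<beta>\<^sup>2\<^sup>b\<close> exceeds \<open>N\<^sup>\<beta>\<^sup>1\<^sup>-\<^sup>1\<close>. Hence about \<open>log N\<close> states contribute, each
  of order \<open>N\<^sup>-\<^sup>\<beta>\<^sup>1\<close>.
\<close>

lemma powr_neg_le_diff_powr:
  fixes \<beta> x :: real
  assumes "\<beta> > 1" and "x > 1"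
  shows "x powr (-\<beta>) \<le> ((x - 1) powr (1 - \<beta>) - x powr (1 - \<beta>)) / (\<beta> - 1)"
proof -
  have deriv: "((\<lambda>t. t powr (1 - \<beta>)) has_real_derivative (1 - \<beta>) * t powr (-\<beta>)) (at t)"
    if "t > 0" for t
    using has_real_derivative_powr[OF that, of "1 - \<beta>"] by simp
  have "\<exists>z. x - 1 < z \<and> z < x \<and>
      x powr (1 - \<beta>) - (x - 1) powr (1 - \<beta>) = (x - (x - 1)) * ((1 - \<beta>) * z powr (-\<beta>))"
    by (rule MVT2) (use assms in \<open>auto intro!: deriv\<close>)
  then obtain z where z: "x - 1 < z" "z < x"
    and mvt: "x powr (1 - \<beta>) - (x - 1) powr (1 - \<beta>) = (1 - \<beta>) * z powr (-\<beta>)"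
    by auto
  have "(\<beta> - 1) * x powr (-\<beta>) \<le> (\<beta> - 1) * z powr (-\<beta>)"
    using z assms by (intro mult_left_mono powr_mono2') auto
  also have "\<dots> = (x - 1) powr (1 - \<beta>) - x powr (1 - \<beta>)"
    using mvt by (simp add: algebra_simps)
  finally show ?thesis
    using assms by (simp add: field_simps)
qed

lemma sum_shift_powr_neg_le:
  fixes \<beta> a :: real
  assumes \<beta>: "\<beta> > 1" and a: "a \<ge> 1"
  shows "(\<Sum>k<n. (a + real k) powr (-\<beta>)) \<le> \<beta> / (\<beta> - 1) * a powr (1 - \<beta>)"
proof (cases n)
  case 0
  then show ?thesis using assms by simp
next
  case (Suc m)
  have telescope: "(\<Sum>k<Suc l. (a + real k) powr (-\<beta>))
      \<le> a powr (-\<beta>) + (a powr (1 - \<beta>) - (a + real l) powr (1 - \<beta>)) / (\<beta> - 1)" for l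
  proof (induction l)
    case (Suc l)
    have "(a + real (Suc l)) powr (-\<beta>)
        \<le> ((a + real l) powr (1 - \<beta>) - (a + real (Suc l)) powr (1 - \<beta>)) / (\<beta> - 1)"
      using powr_neg_le_diff_powr[OF \<beta>, of "a + real (Suc l)"] a by simp
    with Suc show ?case
      by (simp add: diff_divide_distrib)
  qed simp
  have "a powr (-\<beta>) \<le> a powr (1 - \<beta>)"
    using a by (intro powr_mono) auto
  moreover have "(a + real m) powr (1 - \<beta>) \<ge> 0"
    by simp
  ultimately have "a powr (-\<beta>) + (a powr (1 - \<beta>) - (a + real m) powr (1 - \<beta>)) / (\<beta> - 1)
      \<le> a powr (1 - \<beta>) + a powr (1 - \<beta>) / (\<beta> - 1)"
    using \<beta> by (intro add_mono divide_right_mono) auto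
  also have "\<dots> = \<beta> / (\<beta> - 1) * a powr (1 - \<beta>)"
    using \<beta> by (simp add: field_simps)
  finally show ?thesis
    using telescope[of m] Suc by simp
qed

lemma sum_power_le_inverse:
  fixes r :: real
  assumes "0 \<le> r" and "r < 1"
  shows "(\<Sum>k<n. r ^ k) \<le> 1 / (1 - r)"
proof -
  have "(\<Sum>k<n. r ^ k) = (1 - r ^ n) / (1 - r)"
    using assms by (simp add: sum_gp_strict)
  also have "\<dots> \<le> 1 / (1 - r)"
    using assms by (intro divide_right_mono) auto
  finally show ?thesis .
qed

lemma sum_exp_neg_le:
  fixes \<beta> :: real
  assumes "\<beta> > 0"
  shows "(\<Sum>k<n. exp (-(\<beta> * real (b + k)))) \<le> 1 / (1 - exp (-\<beta>))"
proof -
  have "(\<Sum>k<n. exp (-(\<beta> * real (b + k)))) \<le> (\<Sum>k<n. exp (-\<beta>) ^ k)"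
  proof (intro sum_mono)
    fix k
    have "exp (-(\<beta> * real (b + k))) \<le> exp (-(\<beta> * real k))"
      using assms by simp
    also have "\<dots> = exp (-\<beta>) ^ k"
      by (simp add: exp_of_nat_mult[symmetric] mult.commute)
    finally show "exp (-(\<beta> * real (b + k))) \<le> exp (-\<beta>) ^ k" .
  qed
  also have "\<dots> \<le> 1 / (1 - exp (-\<beta>))"
    using assms by (intro sum_power_le_inverse) auto
  finally show ?thesis .
qed

text \<open>Only the first \<open>ln A / \<beta>\<close> terms of the sum are of order 1; the rest is geometric.\<close>
lemma sum_min_1_exp_le:
  fixes A \<beta> :: real
  assumes A: "A \<ge> 1" and \<beta>: "\<beta> > 0"
  shows "(\<Sum>j<n. min 1 (A * exp (-(\<beta> * real j)))) \<le> ln A / \<beta> + 1 + 1 / (1 - exp (-\<beta>))"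
proof -
  define f where "f j = min 1 (A * exp (-(\<beta> * real j)))" for j
  define J where "J = nat \<lceil>ln A / \<beta>\<rceil>"
  have lnA: "ln A / \<beta> \<ge> 0"
    using A \<beta> by simp
  have J_le: "real J \<le> ln A / \<beta> + 1"
    unfolding J_def using of_int_ceiling_le_add_one[of "ln A / \<beta>"] lnA by simp
  have "ln A / \<beta> \<le> real J"
    unfolding J_def using le_of_int_ceiling[of "ln A / \<beta>"] lnA by simp
  then have "ln A \<le> \<beta> * real J"
    using \<beta> by (simp add: pos_divide_le_eq mult.commute)
  then have "exp (ln A) \<le> exp (\<beta> * real J)"
    by simp
  then have "A \<le> exp (\<beta> * real J)"
    using A by simp
  then have AJ: "A * exp (-(\<beta> * real J)) \<le> 1"
    by (simp add: exp_minus divide_inverse[symmetric] divide_le_eq)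
  have tail: "f (J + k) \<le> exp (-(\<beta> * real k))" for k
  proof -
    have "f (J + k) \<le> A * exp (-(\<beta> * real (J + k)))"
      unfolding f_def by simp
    also have "\<dots> = (A * exp (-(\<beta> * real J))) * exp (-(\<beta> * real k))"
      by (simp add: distrib_left exp_add[symmetric])
    also have "\<dots> \<le> exp (-(\<beta> * real k))"
      using AJ A by (intro mult_left_le_one_le) auto
    finally show ?thesis .
  qed
  have f_nonneg: "f j \<ge> 0" for j
    unfolding f_def using A by simp
  have "(\<Sum>j<n. f j) \<le> (\<Sum>j<J + n. f j)"
    using f_nonneg by (intro sum_mono2) auto
  also have "\<dots> = (\<Sum>j<J. f j) + (\<Sum>k<n. f (J + k))"
    by (induction n) simp_all
  also have "(\<Sum>j<J. f j) \<le> real J"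
    using sum_bounded_above[of "{..<J}" f 1] unfolding f_def by simp
  also have "(\<Sum>k<n. f (J + k)) \<le> (\<Sum>k<n. exp (-(\<beta> * real (0 + k))))"
    using tail by (intro sum_mono) simp
  also have "\<dots> \<le> 1 / (1 - exp (-\<beta>))"
    by (rule sum_exp_neg_le[OF \<beta>])
  finally show ?thesis
    using J_le unfolding f_def by linarith
qed

lemma exp_neg_le_inverse_1_plus:
  fixes x :: real
  assumes "x \<ge> 0"
  shows "exp (-x) \<le> 1 / (1 + x)"
  using exp_ge_add_one_self[of x] assms by (simp add: exp_minus field_simps)

lemma powr_neg_mult_powr_diff_1:
  fixes x b :: real
  assumes "x > 0"
  shows "x powr (-b) * x powr (b - 1) = 1 / x"
proof -
  have "x powr (-b) * x powr (b - 1) = x powr (-b + (b - 1))"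
    by (rule powr_add[symmetric])
  then show ?thesis
    using assms by (simp add: powr_minus_divide)
qed

lemma inverse_add_mult_divide:
  fixes x y :: real
  assumes "x > 0" and "y > 0"
  shows "(1 / x + 1 / y) * (x / (x + y)) = 1 / y"
proof -
  have "(1 / x + 1 / y) * (x / (x + y)) = ((x + y) * x) / ((x + y) * (x * y))"
    using assms by (simp add: field_simps)
  also have "\<dots> = 1 / y"
    using assms by (subst mult_divide_mult_cancel_left) auto
  finally show ?thesis .
qed

lemma bigtheta_powr_ln_shift:
  fixes f :: "nat \<Rightarrow> real" and a :: real
  assumes "(\<lambda>m. f (m + k)) \<in> \<Theta>(\<lambda>m. real m powr a * ln (real m))"
  shows "f \<in> \<Theta>(\<lambda>n. real n powr a * ln (real n))"
proof -
  have "(\<lambda>n. f (n - k + k)) \<in> \<Theta>(\<lambda>n. real (n - k) powr a * ln (real (n - k)))"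
    using landau_theta.compose[OF assms filterlim_minus_const_nat_at_top] .
  also have "(\<lambda>n. real (n - k) powr a * ln (real (n - k))) \<in> \<Theta>(\<lambda>n. (real n - real k) powr a * ln (real n - real k))"
    by (intro bigthetaI_cong eventually_mono[OF eventually_ge_at_top[of k]]) (simp add: of_nat_diff)
  also have "(\<lambda>n. (real n - real k) powr a * ln (real n - real k)) \<in> \<Theta>(\<lambda>n. real n powr a * ln (real n))"
    by real_asymp
  finally show ?thesis
    by (rule landau_theta.in_cong[THEN iffD1, rotated])
      (intro eventually_mono[OF eventually_ge_at_top[of k]], simp)
qed

lemma urn_step_inj:
  assumes "i \<in> {1, 2}" and "j \<in> {1, 2}" and "urn_step i s = urn_step j s"
  shows "i = j"
  using assms unfolding urn_step_def by (auto split: if_splits)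

lemma fold_urn_step_bounds:
  "fst (fold urn_step cs s) + snd (fold urn_step cs s) = fst s + snd s + length cs
   \<and> fst s \<le> fst (fold urn_step cs s) \<and> snd s \<le> snd (fold urn_step cs s)"
proof (induction cs arbitrary: s)
  case (Cons i cs)
  from Cons.IH[of "urn_step i s"] show ?case
    by (auto simp: urn_step_def)
qed simp

definition choices :: "nat \<Rightarrow> nat list set" where
  "choices n = {cs. set cs \<subseteq> {1, 2} \<and> length cs = n}"

lemma finite_choices: "finite (choices n)"
  unfolding choices_def by (rule finite_lists_length_eq) simp

lemma choices_0: "choices 0 = {[]}"
  unfolding choices_def by auto

lemma nth_mem_choices:
  assumes "cs \<in> choices n" and "j < n"
  shows "cs ! j \<in> {1, 2}"
proof -
  have "cs ! j \<in> set cs"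
    using assms by (intro nth_mem) (simp add: choices_def)
  then show ?thesis
    using assms(1) by (auto simp: choices_def)
qed

lemma choices_Suc: "choices (Suc n) = (\<lambda>(cs, i). cs @ [i]) ` (choices n \<times> {1, 2})"
proof
  show "choices (Suc n) \<subseteq> (\<lambda>(cs, i). cs @ [i]) ` (choices n \<times> {1, 2})"
  proof
    fix cs assume cs: "cs \<in> choices (Suc n)"
    then have "cs \<noteq> []"
      by (auto simp: choices_def)
    then obtain ds i where "cs = ds @ [i]"
      by (metis rev_exhaust)
    with cs show "cs \<in> (\<lambda>(cs, i). cs @ [i]) ` (choices n \<times> {1, 2})"
      unfolding choices_def by (auto intro!: image_eqI[where x="(ds, i)"])
  qed
qed (auto simp: choices_def)

lemma sum_choices_Suc:
  "(\<Sum>cs\<in>choices (Suc n). f cs) = (\<Sum>cs\<in>choices n. f (cs @ [1]) + f (cs @ [2]))"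
proof -
  have inj: "inj_on (\<lambda>(cs, i). cs @ [i]) (choices n \<times> {1::nat, 2})"
    by (auto simp: inj_on_def)
  have "(\<Sum>cs\<in>choices (Suc n). f cs) = (\<Sum>(cs, i)\<in>choices n \<times> {1, 2}. f (cs @ [i]))"
    unfolding choices_Suc sum.reindex[OF inj] by (simp add: comp_def case_prod_beta)
  also have "\<dots> = (\<Sum>cs\<in>choices n. f (cs @ [1]) + f (cs @ [2]))"
    by (simp add: sum.cartesian_product[symmetric])
  finally show ?thesis .
qed

lemma choices_with_suffix:
  assumes "set ys \<subseteq> {1, 2}"
  shows "{cs \<in> choices (m + length ys). drop m cs = ys} = (\<lambda>ds. ds @ ys) ` choices m"
proof
  show "{cs \<in> choices (m + length ys). drop m cs = ys} \<subseteq> (\<lambda>ds. ds @ ys) ` choices m"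
  proof
    fix cs assume cs: "cs \<in> {cs \<in> choices (m + length ys). drop m cs = ys}"
    then have "cs = take m cs @ ys" and "take m cs \<in> choices m"
      using set_take_subset[of m cs] by (auto simp: choices_def simp del: append_take_drop_id
          intro: append_take_drop_id[symmetric])
    then show "cs \<in> (\<lambda>ds. ds @ ys) ` choices m"
      by blast
  qed
qed (use assms in \<open>auto simp: choices_def\<close>)

locale urn_chain =
  fixes M :: "'a measure" and F1 F2 :: "nat \<Rightarrow> real" and init :: "nat \<times> nat"
    and X :: "'a \<Rightarrow> nat \<Rightarrow> nat \<times> nat"
  assumes urn: "polya_urn M F1 F2 init X"
    and F1_nonneg: "F1 k \<ge> 0" and F1_pos: "k \<ge> 1 \<Longrightarrow> F1 k > 0" and F2_pos: "F2 k > 0"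
    and a0_ge_1: "fst init \<ge> 1" and b0_ge_1: "snd init \<ge> 1"
begin

abbreviation "p \<equiv> urn_p F1 F2"
abbreviation "a0 \<equiv> fst init"
abbreviation "b0 \<equiv> snd init"

sublocale prob_space M
  using urn unfolding polya_urn_def by simp

lemma measurable_X [measurable]: "(\<lambda>\<omega>. X \<omega> n) \<in> measurable M (count_space UNIV)"
  using urn unfolding polya_urn_def by simp

lemma measure_extend_path:
  assumes "i \<in> {1, 2}"
  shows "measure M {\<omega> \<in> space M. (\<forall>k\<le>n. X \<omega> k = h k) \<and> X \<omega> (Suc n) = urn_step i (h n)}
       = measure M {\<omega> \<in> space M. \<forall>k\<le>n. X \<omega> k = h k} * p i (h n)"
  using urn assms unfolding polya_urn_def by blast

lemma p_nonneg: "p i s \<ge> 0"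
  unfolding urn_p_def using F1_nonneg[of "fst s"] F2_pos[of "snd s"] by simp

lemma p_sum: "p 1 s + p 2 s = 1"
proof -
  have "F1 (fst s) + F2 (snd s) > 0"
    using F1_nonneg[of "fst s"] F2_pos[of "snd s"] by simp
  then show ?thesis
    unfolding urn_p_def by (simp add: add_divide_distrib[symmetric])
qed

lemma p_le_1: "p i s \<le> 1"
  using p_sum[of s] p_nonneg[of 1 s] p_nonneg[of 2 s] unfolding urn_p_def
  by (cases "i = 1") auto

lemma p1_ge_exp: "a \<ge> 1 \<Longrightarrow> exp (-(F2 b / F1 a)) \<le> p 1 (a, b)"
  using exp_neg_le_inverse_1_plus[of "F2 b / F1 a"] F1_pos[of a] F2_pos[of b]
  by (simp add: urn_p_def field_simps)

lemma p2_ge_exp: "exp (-(F1 a / F2 b)) \<le> p 2 (a, b)"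
  using exp_neg_le_inverse_1_plus[of "F1 a / F2 b"] F1_nonneg[of a] F2_pos[of b]
  by (simp add: urn_p_def field_simps)

primrec path_prob :: "nat \<times> nat \<Rightarrow> nat list \<Rightarrow> real" where
  "path_prob s [] = 1"
| "path_prob s (i # cs) = p i s * path_prob (urn_step i s) cs"

lemma path_prob_append:
  "path_prob s (cs @ ds) = path_prob s cs * path_prob (fold urn_step cs s) ds"
  by (induction cs arbitrary: s) auto

lemma path_prob_replicate_1:
  "path_prob s (replicate n 1) = (\<Prod>k<n. p 1 (fst s + k, snd s))"
proof (induction n arbitrary: s)
  case (Suc n)
  then show ?case
    by (simp add: urn_step_def prod.lessThan_Suc_shift del: prod.lessThan_Suc)
qed simp

lemma sum_path_prob: "(\<Sum>cs\<in>choices n. path_prob init cs) = 1"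
proof (induction n)
  case (Suc n)
  have "(\<Sum>cs\<in>choices (Suc n). path_prob init cs)
      = (\<Sum>cs\<in>choices n. path_prob init cs * (p 1 (fold urn_step cs init) + p 2 (fold urn_step cs init)))"
    unfolding sum_choices_Suc by (simp add: path_prob_append distrib_left)
  with Suc show ?case
    by (simp add: p_sum[unfolded One_nat_def])
qed (simp add: choices_0)

definition path_state :: "nat list \<Rightarrow> nat \<Rightarrow> nat \<times> nat" where
  "path_state cs k = fold urn_step (take k cs) init"

definition path_event :: "nat list \<Rightarrow> 'a set" where
  "path_event cs = {\<omega> \<in> space M. \<forall>k\<le>length cs. X \<omega> k = path_state cs k}"

lemma path_state_Suc: "k < length cs \<Longrightarrow> path_state cs (Suc k) = urn_step (cs ! k) (path_state cs k)"
  unfolding path_state_def by (simp add: take_Suc_conv_app_nth)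

lemma sets_path_event [measurable]: "path_event cs \<in> sets M"
  unfolding path_event_def by measurable

lemma measure_path_event: "set cs \<subseteq> {1, 2} \<Longrightarrow> measure M (path_event cs) = path_prob init cs"
proof (induction cs rule: rev_induct)
  case Nil
  have "AE \<omega> in M. X \<omega> 0 = init"
    using urn unfolding polya_urn_def by simp
  then have "prob {\<omega> \<in> space M. X \<omega> 0 = init} = 1"
    by (simp add: prob_Collect_eq_1)
  moreover have "path_event [] = {\<omega> \<in> space M. X \<omega> 0 = init}"
    unfolding path_event_def path_state_def by auto
  ultimately show ?case
    by simp
next
  case (snoc i cs)
  let ?n = "length cs"
  have "path_event (cs @ [i]) = {\<omega> \<in> space M. (\<forall>k\<le>?n. X \<omega> k = path_state cs k)
      \<and> X \<omega> (Suc ?n) = urn_step i (path_state cs ?n)}"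
    unfolding path_event_def path_state_def by (auto simp: le_Suc_eq)
  also have "measure M \<dots> = measure M (path_event cs) * p i (path_state cs ?n)"
    using measure_extend_path[of i] snoc.prems unfolding path_event_def by simp
  also have "\<dots> = path_prob init (cs @ [i])"
    using snoc by (simp add: path_prob_append path_state_def)
  finally show ?case .
qed

lemma path_state_inj:
  assumes cs: "cs \<in> choices n" and ds: "ds \<in> choices n"
    and eq: "\<forall>k\<le>n. path_state cs k = path_state ds k"
  shows "cs = ds"
proof (rule nth_equalityI)
  show "length cs = length ds"
    using cs ds by (simp add: choices_def)
  fix k assume "k < length cs"
  then have k: "k < n"
    using cs by (simp add: choices_def)
  have "urn_step (cs ! k) (path_state cs k) = urn_step (ds ! k) (path_state cs k)"
    using eq[rule_format, of k] eq[rule_format, of "Suc k"] k cs ds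
    by (simp add: path_state_Suc choices_def)
  then show "cs ! k = ds ! k"
    using urn_step_inj nth_mem_choices[OF cs k] nth_mem_choices[OF ds k] by blast
qed

lemma path_event_disjoint: "disjoint_family_on path_event (choices n)"
  unfolding disjoint_family_on_def
proof (intro ballI impI)
  fix cs ds assume "cs \<in> choices n" "ds \<in> choices n" "cs \<noteq> ds"
  then show "path_event cs \<inter> path_event ds = {}"
    using path_state_inj[of cs n ds] unfolding path_event_def choices_def by auto
qed

lemma measure_eq_sum_path_events:
  assumes A: "A \<in> sets M"
  shows "measure M A = (\<Sum>cs\<in>choices n. measure M (A \<inter> path_event cs))"
proof -
  let ?V = "\<Union>cs\<in>choices n. path_event cs"
  have V: "?V \<in> sets M"
    using finite_choices by auto
  have "prob ?V = (\<Sum>cs\<in>choices n. prob (path_event cs))"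
    by (rule measure_finite_Union[OF finite_choices]) (auto intro: path_event_disjoint)
  also have "\<dots> = 1"
    using sum_path_prob measure_path_event by (simp add: choices_def)
  finally have "prob (space M - ?V) = 0"
    using V by (simp add: prob_compl)
  moreover have "prob (A - ?V) \<le> prob (space M - ?V)"
    using A V sets.sets_into_space[OF A] by (intro finite_measure_mono) auto
  ultimately have "prob (A - ?V) = 0"
    using measure_nonneg[of M "A - ?V"] by linarith
  then have "prob A = prob (A \<inter> ?V)"
    using finite_measure_Diff'[OF A V] by (simp add: Int_commute)
  also have "A \<inter> ?V = (\<Union>cs\<in>choices n. A \<inter> path_event cs)"
    by blast
  also have "prob \<dots> = (\<Sum>cs\<in>choices n. prob (A \<inter> path_event cs))"
    using path_event_disjoint[of n] A
    by (intro measure_finite_Union[OF finite_choices]) (auto simp: disjoint_family_on_def)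
  finally show ?thesis .
qed

definition state_prob :: "nat \<times> nat \<Rightarrow> real" where
  "state_prob s = (\<Sum>cs\<in>{cs \<in> choices (fst s + snd s - a0 - b0). fold urn_step cs init = s}.
     path_prob init cs)"

lemma sum_choices_by_state:
  "(\<Sum>cs\<in>choices m. path_prob init cs * g (fold urn_step cs init))
     = (\<Sum>j\<le>m. state_prob (a0 + (m - j), b0 + j) * g (a0 + (m - j), b0 + j))"
proof -
  let ?E = "\<lambda>cs. fold urn_step cs init"
  let ?s = "\<lambda>j. (a0 + (m - j), b0 + j)"
  have "?E ` choices m \<subseteq> ?s ` {..m}"
  proof
    fix y assume "y \<in> ?E ` choices m"
    then obtain cs where "cs \<in> choices m" "y = ?E cs"
      by auto
    then have "fst y + snd y = a0 + b0 + m" "fst y \<ge> a0" "snd y \<ge> b0"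
      using fold_urn_step_bounds[of cs init] by (auto simp: choices_def)
    then have "y = ?s (snd y - b0)" "snd y - b0 \<le> m"
      by (cases y; auto)+
    then show "y \<in> ?s ` {..m}"
      by blast
  qed
  then have "(\<Sum>cs\<in>choices m. path_prob init cs * g (?E cs))
      = (\<Sum>y\<in>?s ` {..m}. \<Sum>cs\<in>{cs \<in> choices m. ?E cs = y}. path_prob init cs * g (?E cs))"
    by (intro sum.group[OF finite_choices, symmetric]) simp
  also have "\<dots> = (\<Sum>j\<le>m. \<Sum>cs\<in>{cs \<in> choices m. ?E cs = ?s j}. path_prob init cs * g (?s j))"
    by (rule sum.reindex_cong[where l="?s"]) (auto simp: inj_on_def)
  also have "\<dots> = (\<Sum>j\<le>m. state_prob (?s j) * g (?s j))"
  proof (intro sum.cong refl)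
    fix j assume "j \<in> {..m}"
    then have "fst (?s j) + snd (?s j) - a0 - b0 = m"
      by simp
    then show "(\<Sum>cs\<in>{cs \<in> choices m. ?E cs = ?s j}. path_prob init cs * g (?s j))
        = state_prob (?s j) * g (?s j)"
      unfolding state_prob_def by (simp add: sum_distrib_right)
  qed
  finally show ?thesis .
qed

lemma state_prob_eq_0:
  assumes "fst s < a0 \<or> snd s < b0"
  shows "state_prob s = 0"
proof -
  have "fold urn_step cs init \<noteq> s" for cs
    using fold_urn_step_bounds[of cs init] assms by auto
  then show ?thesis
    unfolding state_prob_def by simp
qed

lemma state_prob_init: "state_prob init = 1"
proof -
  have "{cs \<in> choices (a0 + b0 - a0 - b0). fold urn_step cs init = init} = {[]}"
    by (auto simp: choices_def)
  then show ?thesis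
    unfolding state_prob_def by simp
qed

lemma state_prob_rec:
  assumes "a \<ge> 1" and "b \<ge> 1" and "a + b = a0 + b0 + Suc m"
  shows "state_prob (a, b) = state_prob (a - 1, b) * p 1 (a - 1, b) + state_prob (a, b - 1) * p 2 (a, b - 1)"
proof -
  let ?E = "\<lambda>cs. fold urn_step cs init"
  let ?P = "\<lambda>s cs. if ?E cs = s then path_prob init cs else 0"
  have level: "a + b - a0 - b0 = Suc m" "a - 1 + b - a0 - b0 = m" "a + (b - 1) - a0 - b0 = m"
    "a + b - Suc (a0 + b0) = m"
    using assms by auto
  have "state_prob (a, b) = (\<Sum>cs\<in>choices (Suc m). ?P (a, b) cs)"
    unfolding state_prob_def using level by (simp add: sum.inter_filter[OF finite_choices])
  also have "\<dots> = (\<Sum>cs\<in>choices m. ?P (a - 1, b) cs * p 1 (a - 1, b) + ?P (a, b - 1) cs * p 2 (a, b - 1))"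
    unfolding sum_choices_Suc
  proof (intro sum.cong refl)
    fix cs
    have "urn_step 1 (?E cs) = (a, b) \<longleftrightarrow> ?E cs = (a - 1, b)"
      "urn_step 2 (?E cs) = (a, b) \<longleftrightarrow> ?E cs = (a, b - 1)"
      using assms by (cases "?E cs"; auto simp: urn_step_def)+
    then show "?P (a, b) (cs @ [1]) + ?P (a, b) (cs @ [2])
        = ?P (a - 1, b) cs * p 1 (a - 1, b) + ?P (a, b - 1) cs * p 2 (a, b - 1)"
      by (auto simp: path_prob_append)
  qed
  also have "\<dots> = state_prob (a - 1, b) * p 1 (a - 1, b) + state_prob (a, b - 1) * p 2 (a, b - 1)"
    unfolding state_prob_def sum.distrib sum_distrib_right[symmetric] using level
    by (simp add: sum.inter_filter[OF finite_choices])
  finally show ?thesis .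
qed

definition weight :: "nat \<Rightarrow> nat \<Rightarrow> real" where
  "weight i j = 1 / F1 (a0 + i) + 1 / F2 (b0 + j)"

text \<open>
  \<open>backward_prob i j\<close> is the probability that a walk started in \<open>(a0 + i, b0 + j)\<close>, which at
  state \<open>s\<close> removes a ball of agent \<open>k\<close> with probability \<open>p k s\<close> and is killed when it leaves
  the quadrant above \<open>init\<close>, reaches \<open>init\<close>.\<close>
fun backward_prob :: "nat \<Rightarrow> nat \<Rightarrow> real" where
  "backward_prob 0 0 = 1"
| "backward_prob (Suc i) 0 = p 1 (a0 + Suc i, b0) * backward_prob i 0"
| "backward_prob 0 (Suc j) = p 2 (a0, b0 + Suc j) * backward_prob 0 j"
| "backward_prob (Suc i) (Suc j) =
     p 1 (a0 + Suc i, b0 + Suc j) * backward_prob i (Suc j)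
     + p 2 (a0 + Suc i, b0 + Suc j) * backward_prob (Suc i) j"

lemma weight_pos: "weight i j > 0"
  unfolding weight_def using F1_pos[of "a0 + i"] F2_pos[of "b0 + j"] a0_ge_1 by (simp add: add_pos_pos)

lemma weight_mult_p1: "weight i j * p 1 (a0 + i, b0 + j) = 1 / F2 (b0 + j)"
  using inverse_add_mult_divide[of "F1 (a0 + i)" "F2 (b0 + j)"] F1_pos[of "a0 + i"] F2_pos a0_ge_1
  unfolding weight_def urn_p_def by simp

lemma weight_mult_p2: "weight i j * p 2 (a0 + i, b0 + j) = 1 / F1 (a0 + i)"
  using inverse_add_mult_divide[of "F2 (b0 + j)" "F1 (a0 + i)"] F1_pos[of "a0 + i"] F2_pos a0_ge_1
  unfolding weight_def urn_p_def by (simp add: add.commute)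

text \<open>
  By \<open>weight_mult_p1\<close> and \<open>weight_mult_p2\<close>, multiplying the forward recursion \<open>state_prob_rec\<close>
  by the weight of the target state turns it into the backward recursion, in which the
  transition probabilities are evaluated at the later state.\<close>
lemma state_prob_eq_backward_prob:
  "state_prob (a0 + i, b0 + j) = weight i j * backward_prob i j / weight 0 0"
proof (induction i j rule: backward_prob.induct)
  case 1
  show ?case
    using state_prob_init weight_pos[of 0 0] by simp
next
  case (2 i)
  have "state_prob (a0 + Suc i, b0) = state_prob (a0 + i, b0) * p 1 (a0 + i, b0)"
    using state_prob_rec[of "a0 + Suc i" b0 i] state_prob_eq_0[of "(a0 + Suc i, b0 - 1)"] a0_ge_1 b0_ge_1
    by simp
  also have "\<dots> = (weight i 0 * p 1 (a0 + i, b0 + 0)) * backward_prob i 0 / weight 0 0"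
    using 2 by simp
  also have "\<dots> = (weight (Suc i) 0 * p 1 (a0 + Suc i, b0 + 0)) * backward_prob i 0 / weight 0 0"
    by (simp only: weight_mult_p1)
  finally show ?case
    by simp
next
  case (3 j)
  have "state_prob (a0, b0 + Suc j) = state_prob (a0, b0 + j) * p 2 (a0, b0 + j)"
    using state_prob_rec[of a0 "b0 + Suc j" j] state_prob_eq_0[of "(a0 - 1, b0 + Suc j)"] a0_ge_1 b0_ge_1
    by simp
  also have "\<dots> = (weight 0 j * p 2 (a0 + 0, b0 + j)) * backward_prob 0 j / weight 0 0"
    using 3 by simp
  also have "\<dots> = (weight 0 (Suc j) * p 2 (a0 + 0, b0 + Suc j)) * backward_prob 0 j / weight 0 0"
    by (simp only: weight_mult_p2)
  finally show ?case
    by simp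
next
  case (4 i j)
  have "state_prob (a0 + Suc i, b0 + Suc j)
      = state_prob (a0 + i, b0 + Suc j) * p 1 (a0 + i, b0 + Suc j)
        + state_prob (a0 + Suc i, b0 + j) * p 2 (a0 + Suc i, b0 + j)"
    using state_prob_rec[of "a0 + Suc i" "b0 + Suc j" "Suc (i + j)"] a0_ge_1 b0_ge_1 by simp
  also have "\<dots> = (weight i (Suc j) * p 1 (a0 + i, b0 + Suc j)) * backward_prob i (Suc j) / weight 0 0
      + (weight (Suc i) j * p 2 (a0 + Suc i, b0 + j)) * backward_prob (Suc i) j / weight 0 0"
    using 4 by (simp add: algebra_simps)
  also have "\<dots> = (weight (Suc i) (Suc j) * p 1 (a0 + Suc i, b0 + Suc j)) * backward_prob i (Suc j) / weight 0 0
      + (weight (Suc i) (Suc j) * p 2 (a0 + Suc i, b0 + Suc j)) * backward_prob (Suc i) j / weight 0 0"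
    by (simp only: weight_mult_p1 weight_mult_p2)
  also have "\<dots> = weight (Suc i) (Suc j) * backward_prob (Suc i) (Suc j) / weight 0 0"
    by (simp add: algebra_simps add_divide_distrib)
  finally show ?case .
qed

lemma backward_prob_bounds: "0 \<le> backward_prob i j \<and> backward_prob i j \<le> 1"
proof (induction i j rule: backward_prob.induct)
  case (4 i j)
  let ?s = "(a0 + Suc i, b0 + Suc j)"
  have "p 1 ?s * backward_prob i (Suc j) + p 2 ?s * backward_prob (Suc i) j \<le> p 1 ?s * 1 + p 2 ?s * 1"
    using 4 p_nonneg by (intro add_mono mult_left_mono) auto
  then show ?case
    using 4 p_nonneg[of 1 ?s] p_nonneg[of 2 ?s] p_sum[of ?s] by simp
qed (auto simp: p_nonneg p_le_1 intro!: mult_le_one)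

lemma backward_prob_first_row:
  "exp (-(F2 b0 * (\<Sum>k<i. 1 / F1 (a0 + Suc k)))) \<le> backward_prob i 0"
proof (induction i)
  case (Suc i)
  have "exp (-(F2 b0 * (\<Sum>k<Suc i. 1 / F1 (a0 + Suc k))))
      = exp (-(F2 b0 / F1 (a0 + Suc i))) * exp (-(F2 b0 * (\<Sum>k<i. 1 / F1 (a0 + Suc k))))"
    by (simp add: exp_add[symmetric] algebra_simps)
  also have "\<dots> \<le> p 1 (a0 + Suc i, b0) * backward_prob i 0"
    using Suc p1_ge_exp[of "a0 + Suc i" b0] p_nonneg by (intro mult_mono) auto
  finally show ?case
    by simp
qed simp

lemma backward_prob_first_col:
  "exp (-(F1 a0 * (\<Sum>k<j. 1 / F2 (b0 + Suc k)))) \<le> backward_prob 0 j"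
proof (induction j)
  case (Suc j)
  have "exp (-(F1 a0 * (\<Sum>k<Suc j. 1 / F2 (b0 + Suc k))))
      = exp (-(F1 a0 / F2 (b0 + Suc j))) * exp (-(F1 a0 * (\<Sum>k<j. 1 / F2 (b0 + Suc k))))"
    by (simp add: exp_add[symmetric] algebra_simps)
  also have "\<dots> \<le> p 2 (a0, b0 + Suc j) * backward_prob 0 j"
    using Suc p2_ge_exp[of a0 "b0 + Suc j"] p_nonneg by (intro mult_mono) auto
  finally show ?case
    by simp
qed simp

text \<open>
  Away from the boundary the recursion is a convex combination, so the minimum is attained on the
  boundary.\<close>
lemma backward_prob_ge:
  assumes S1: "\<And>n. (\<Sum>k<n. 1 / F1 (a0 + Suc k)) \<le> S1"
    and S2: "\<And>n. (\<Sum>k<n. 1 / F2 (b0 + Suc k)) \<le> S2"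
  shows "min (exp (-(F2 b0 * S1))) (exp (-(F1 a0 * S2))) \<le> backward_prob i j"
proof (induction i j rule: backward_prob.induct)
  case 1
  have "F2 b0 * S1 \<ge> 0"
    using S1[of 0] F2_pos[of b0] by simp
  then show ?case
    by (simp add: min_le_iff_disj)
next
  case (2 i)
  have "min (exp (-(F2 b0 * S1))) (exp (-(F1 a0 * S2))) \<le> exp (-(F2 b0 * S1))"
    by simp
  also have "\<dots> \<le> exp (-(F2 b0 * (\<Sum>k<Suc i. 1 / F1 (a0 + Suc k))))"
    using S1[of "Suc i"] F2_pos[of b0] by (simp add: mult_left_mono)
  also have "\<dots> \<le> backward_prob (Suc i) 0"
    by (rule backward_prob_first_row)
  finally show ?case .
next
  case (3 j)
  have "min (exp (-(F2 b0 * S1))) (exp (-(F1 a0 * S2))) \<le> exp (-(F1 a0 * S2))"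
    by simp
  also have "\<dots> \<le> exp (-(F1 a0 * (\<Sum>k<Suc j. 1 / F2 (b0 + Suc k))))"
    using S2[of "Suc j"] F1_nonneg[of a0] by (simp add: mult_left_mono)
  also have "\<dots> \<le> backward_prob 0 (Suc j)"
    by (rule backward_prob_first_col)
  finally show ?case .
next
  case (4 i j)
  let ?s = "(a0 + Suc i, b0 + Suc j)" and ?\<sigma> = "min (exp (-(F2 b0 * S1))) (exp (-(F1 a0 * S2)))"
  have "p 1 ?s * ?\<sigma> + p 2 ?s * ?\<sigma> \<le> p 1 ?s * backward_prob i (Suc j) + p 2 ?s * backward_prob (Suc i) j"
    using 4 p_nonneg by (intro add_mono mult_left_mono) auto
  then show ?case
    using p_sum[of ?s] by (simp add: distrib_right[symmetric])
qed

definition draw1 :: "nat \<Rightarrow> 'a set" where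
  "draw1 j = {\<omega> \<in> space M. X \<omega> (Suc j) = urn_step 1 (X \<omega> j)}"

definition last2_upto :: "nat \<Rightarrow> nat \<Rightarrow> 'a set" where
  "last2_upto m L = (space M - draw1 m) \<inter> (\<Inter>j\<in>{Suc m..Suc m + L}. draw1 j)"

definition last2 :: "nat \<Rightarrow> 'a set" where
  "last2 m = (space M - draw1 m) \<inter> (\<Inter>j\<in>{Suc m..}. draw1 j)"

lemma sets_draw1 [measurable]: "draw1 j \<in> sets M"
proof -
  have "draw1 j = (\<Union>s. {\<omega> \<in> space M. X \<omega> (Suc j) = urn_step 1 s} \<inter> {\<omega> \<in> space M. X \<omega> j = s})"
    unfolding draw1_def by auto
  also have "\<dots> \<in> sets M"
    by measurable
  finally show ?thesis .
qed

lemma sets_last2_upto [measurable]: "last2_upto m L \<in> sets M"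
  unfolding last2_upto_def by auto

lemma sets_last2 [measurable]: "last2 m \<in> sets M"
  unfolding last2_def by auto

lemma sets_sMon1 [measurable]: "sMon1 M X \<in> sets M"
proof -
  have "{\<omega> \<in> space M. snd (X \<omega> n) = snd (X \<omega> N)}
      = (\<Union>v. {\<omega> \<in> space M. snd (X \<omega> n) = v} \<inter> {\<omega> \<in> space M. snd (X \<omega> N) = v})" for n N
    by auto
  moreover have "(\<Union>v. {\<omega> \<in> space M. snd (X \<omega> n) = v} \<inter> {\<omega> \<in> space M. snd (X \<omega> N) = v}) \<in> sets M"
    for n N
    by measurable
  ultimately have "{\<omega> \<in> space M. snd (X \<omega> n) = snd (X \<omega> N)} \<in> sets M" for n N
    by simp
  moreover have "sMon1 M X = (\<Union>N. \<Inter>n\<in>{N..}. {\<omega> \<in> space M. snd (X \<omega> n) = snd (X \<omega> N)})"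
    unfolding sMon1_def by auto
  ultimately show ?thesis
    by (simp add: sets.countable_UN sets.countable_INT')
qed

lemma mono_from_mono: "mono_from X \<omega> k i \<Longrightarrow> k \<le> n \<Longrightarrow> mono_from X \<omega> n i"
  unfolding mono_from_def by simp

lemma mono_from_1_iff:
  assumes "\<omega> \<in> space M"
  shows "mono_from X \<omega> (Suc n) 1 \<longleftrightarrow> (\<forall>j\<ge>n. \<omega> \<in> draw1 j)"
proof
  assume "mono_from X \<omega> (Suc n) 1"
  then show "\<forall>j\<ge>n. \<omega> \<in> draw1 j"
    using assms unfolding mono_from_def draw1_def by auto
next
  assume all: "\<forall>j\<ge>n. \<omega> \<in> draw1 j"
  show "mono_from X \<omega> (Suc n) 1"
    unfolding mono_from_def
  proof (intro allI impI)
    fix k assume "Suc n \<le> k"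
    then obtain j where "k = Suc j" "j \<ge> n"
      by (cases k) auto
    then show "X \<omega> k = urn_step 1 (X \<omega> (k - 1))"
      using all unfolding draw1_def by simp
  qed
qed

lemma not_mono_from_2: "\<omega> \<in> sMon1 M X \<Longrightarrow> \<not> mono_from X \<omega> n 2"
proof
  assume "\<omega> \<in> sMon1 M X" and mono: "mono_from X \<omega> n 2"
  then obtain N where N: "\<forall>k\<ge>N. snd (X \<omega> k) = snd (X \<omega> N)"
    unfolding sMon1_def by blast
  define k where "k = Suc (max N n)"
  have "X \<omega> k = urn_step 2 (X \<omega> (k - 1))"
    using mono unfolding mono_from_def k_def by simp
  then have "snd (X \<omega> k) = snd (X \<omega> (k - 1)) + 1"
    by (simp add: urn_step_def)
  moreover have "k \<ge> N" and "k - 1 \<ge> N"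
    unfolding k_def by simp_all
  then have "snd (X \<omega> k) = snd (X \<omega> N)" and "snd (X \<omega> (k - 1)) = snd (X \<omega> N)"
    using N by blast+
  ultimately show False
    by simp
qed

lemma sMon1_if_mono_from_1:
  assumes "\<omega> \<in> space M" and mono: "mono_from X \<omega> n 1"
  shows "\<omega> \<in> sMon1 M X"
proof -
  have "snd (X \<omega> k) = snd (X \<omega> n)" if "k \<ge> n" for k
    using that
  proof (induction k rule: dec_induct)
    case (step k)
    then show ?case
      using mono unfolding mono_from_def by (simp add: urn_step_def)
  qed simp
  then show ?thesis
    using assms(1) unfolding sMon1_def by blast
qed

lemma Nmon_eq_inter_sMon1: "Nmon_eq M X (Suc (Suc m)) \<inter> sMon1 M X = last2 m"
proof (intro equalityI subsetI)
  fix \<omega> assume "\<omega> \<in> Nmon_eq M X (Suc (Suc m)) \<inter> sMon1 M X"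
  then have \<omega>: "\<omega> \<in> space M" "\<omega> \<in> sMon1 M X"
    and mono: "\<exists>i\<in>{1, 2}. mono_from X \<omega> (Suc (Suc m)) i"
    and first: "\<not> mono_from X \<omega> (Suc m) 1"
    unfolding Nmon_eq_def by auto
  have after: "\<forall>j\<ge>Suc m. \<omega> \<in> draw1 j"
    using mono not_mono_from_2[OF \<omega>(2)] mono_from_1_iff[OF \<omega>(1)] by auto
  moreover have "\<omega> \<notin> draw1 m"
  proof
    assume "\<omega> \<in> draw1 m"
    with after have "\<forall>j\<ge>m. \<omega> \<in> draw1 j"
      by (metis Suc_le_eq le_neq_implies_less)
    with first show False
      using mono_from_1_iff[OF \<omega>(1)] by blast
  qed
  ultimately show "\<omega> \<in> last2 m"
    unfolding last2_def using \<omega>(1) by auto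
next
  fix \<omega> assume "\<omega> \<in> last2 m"
  then have \<omega>: "\<omega> \<in> space M" and "\<omega> \<notin> draw1 m" and after: "\<forall>j\<ge>Suc m. \<omega> \<in> draw1 j"
    unfolding last2_def by auto
  have mono: "mono_from X \<omega> (Suc (Suc m)) 1"
    using mono_from_1_iff[OF \<omega>] after by blast
  then have sMon1: "\<omega> \<in> sMon1 M X"
    by (rule sMon1_if_mono_from_1[OF \<omega>])
  have "\<not> mono_from X \<omega> (Suc m) 1"
    using mono_from_1_iff[OF \<omega>] \<open>\<omega> \<notin> draw1 m\<close> by blast
  then have "\<not> mono_from X \<omega> k i" if "k < Suc (Suc m)" and "i \<in> {1, 2}" for k i
    using that mono_from_mono[of \<omega> k 1 "Suc m"] not_mono_from_2[OF sMon1] by auto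
  with \<omega> mono sMon1 show "\<omega> \<in> Nmon_eq M X (Suc (Suc m)) \<inter> sMon1 M X"
    unfolding Nmon_eq_def by auto
qed

lemma last2_eq_INT: "last2 m = (\<Inter>L. last2_upto m L)"
proof -
  have "(\<forall>j\<ge>Suc m. \<omega> \<in> draw1 j) \<longleftrightarrow> (\<forall>L. \<forall>j\<in>{Suc m..Suc m + L}. \<omega> \<in> draw1 j)" for \<omega>
  proof (intro iffI allI impI)
    fix j assume "\<forall>L. \<forall>j\<in>{Suc m..Suc m + L}. \<omega> \<in> draw1 j" and "Suc m \<le> j"
    then show "\<omega> \<in> draw1 j"
      by (metis atLeastAtMost_iff le_add2)
  qed auto
  then show ?thesis
    unfolding last2_def last2_upto_def by auto
qed

lemma measure_last2_le: "measure M (last2 m) \<le> measure M (last2_upto m L)"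
  by (intro finite_measure_mono) (auto simp: last2_eq_INT)

lemma measure_last2_ge:
  assumes "\<And>L. c \<le> measure M (last2_upto m L)"
  shows "c \<le> measure M (last2 m)"
proof -
  have "(\<lambda>L. measure M (last2_upto m L)) \<longlonglongrightarrow> measure M (\<Inter>L. last2_upto m L)"
    by (rule finite_Lim_measure_decseq) (auto simp: decseq_def last2_upto_def)
  then show ?thesis
    unfolding last2_eq_INT using assms by (intro LIMSEQ_le_const) auto
qed

definition run1_prob :: "nat \<Rightarrow> nat \<Rightarrow> nat \<Rightarrow> real" where
  "run1_prob L a b = (\<Prod>k<Suc L. p 1 (a + k, b))"

lemma path_event_draw1_iff:
  assumes "cs \<in> choices n" and "j < n" and "\<omega> \<in> path_event cs"
  shows "\<omega> \<in> draw1 j \<longleftrightarrow> cs ! j = 1"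
proof -
  have "X \<omega> (Suc j) = urn_step (cs ! j) (X \<omega> j)" and "\<omega> \<in> space M"
    using assms path_state_Suc[of j cs] unfolding path_event_def choices_def by auto
  then have "\<omega> \<in> draw1 j \<longleftrightarrow> urn_step (cs ! j) (X \<omega> j) = urn_step 1 (X \<omega> j)"
    unfolding draw1_def by simp
  also have "\<dots> \<longleftrightarrow> cs ! j = 1"
    using urn_step_inj[of "cs ! j" 1 "X \<omega> j"] nth_mem_choices[OF assms(1,2)] by auto
  finally show ?thesis .
qed

lemma drop_eq_2_replicate_1_iff:
  assumes cs: "cs \<in> choices (m + Suc (Suc L))"
  shows "drop m cs = 2 # replicate (Suc L) 1
    \<longleftrightarrow> cs ! m \<noteq> 1 \<and> (\<forall>j\<in>{Suc m..Suc m + L}. cs ! j = 1)"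
proof -
  have len: "length cs = m + Suc (Suc L)"
    using cs by (simp add: choices_def)
  have "drop m cs = cs ! m # drop (Suc m) cs"
    using len by (simp add: Cons_nth_drop_Suc)
  moreover have "cs ! m \<noteq> 1 \<longleftrightarrow> cs ! m = 2"
    using nth_mem_choices[OF cs, of m] by auto
  moreover have "drop (Suc m) cs = replicate (Suc L) 1 \<longleftrightarrow> (\<forall>i<Suc L. cs ! (Suc m + i) = 1)"
    using len by (simp add: list_eq_iff_nth_eq del: replicate_Suc)
  moreover have "(\<forall>i<Suc L. cs ! (Suc m + i) = 1) \<longleftrightarrow> (\<forall>j\<in>{Suc m..Suc m + L}. cs ! j = 1)"
  proof
    assume h: "\<forall>i<Suc L. cs ! (Suc m + i) = 1"
    show "\<forall>j\<in>{Suc m..Suc m + L}. cs ! j = 1"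
    proof
      fix j assume "j \<in> {Suc m..Suc m + L}"
      then have "j - Suc m < Suc L" and "j = Suc m + (j - Suc m)"
        by auto
      then show "cs ! j = 1"
        using h by metis
    qed
  qed auto
  ultimately show ?thesis
    by auto
qed

lemma last2_upto_inter_path_event:
  assumes cs: "cs \<in> choices (m + Suc (Suc L))"
  shows "last2_upto m L \<inter> path_event cs
    = (if drop m cs = 2 # replicate (Suc L) 1 then path_event cs else {})"
proof -
  have "\<omega> \<in> last2_upto m L \<longleftrightarrow> drop m cs = 2 # replicate (Suc L) 1" if "\<omega> \<in> path_event cs" for \<omega>
    using that path_event_draw1_iff[OF cs _ that] drop_eq_2_replicate_1_iff[OF cs]
    unfolding last2_upto_def path_event_def by auto
  then show ?thesis
    by auto
qed

lemma measure_last2_upto_paths: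
  "measure M (last2_upto m L) = (\<Sum>cs\<in>choices m. path_prob init cs
     * (p 2 (fold urn_step cs init) * run1_prob L (fst (fold urn_step cs init)) (snd (fold urn_step cs init) + 1)))"
proof -
  let ?ys = "2 # replicate (Suc L) (1::nat)"
  have suffix: "{cs \<in> choices (m + length ?ys). drop m cs = ?ys} = (\<lambda>ds. ds @ ?ys) ` choices m"
    by (rule choices_with_suffix) (simp add: set_replicate_conv_if)
  have "measure M (last2_upto m L) = (\<Sum>cs\<in>choices (m + length ?ys). measure M (last2_upto m L \<inter> path_event cs))"
    by (rule measure_eq_sum_path_events) simp
  also have "\<dots> = (\<Sum>cs\<in>choices (m + length ?ys). if drop m cs = ?ys then path_prob init cs else 0)"
    using last2_upto_inter_path_event measure_path_event by (intro sum.cong) (auto simp: choices_def)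
  also have "\<dots> = (\<Sum>cs\<in>{cs \<in> choices (m + length ?ys). drop m cs = ?ys}. path_prob init cs)"
    by (simp only: sum.inter_filter[OF finite_choices])
  also have "\<dots> = (\<Sum>cs\<in>(\<lambda>ds. ds @ ?ys) ` choices m. path_prob init cs)"
    by (simp only: suffix)
  also have "\<dots> = (\<Sum>cs\<in>choices m. path_prob init (cs @ ?ys))"
    by (rule sum.reindex_cong[where l="\<lambda>ds. ds @ ?ys"]) (auto simp: inj_on_def)
  also have "\<dots> = (\<Sum>cs\<in>choices m. path_prob init cs
     * (p 2 (fold urn_step cs init) * run1_prob L (fst (fold urn_step cs init)) (snd (fold urn_step cs init) + 1)))"
    by (simp add: path_prob_append path_prob_replicate_1[unfolded One_nat_def] run1_prob_def urn_step_def
        del: replicate_Suc prod.lessThan_Suc)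
  finally show ?thesis .
qed

lemma measure_last2_upto:
  "measure M (last2_upto m L) = (\<Sum>j\<le>m. backward_prob (m - j) j / (weight 0 0 * F1 (a0 + (m - j)))
     * run1_prob L (a0 + (m - j)) (b0 + j + 1))"
proof -
  have "measure M (last2_upto m L) = (\<Sum>j\<le>m. state_prob (a0 + (m - j), b0 + j)
      * (p 2 (a0 + (m - j), b0 + j) * run1_prob L (a0 + (m - j)) (b0 + j + 1)))"
    unfolding measure_last2_upto_paths
    using sum_choices_by_state[of "\<lambda>s. p 2 s * run1_prob L (fst s) (snd s + 1)" m] by simp
  also have "\<dots> = (\<Sum>j\<le>m. (weight (m - j) j * p 2 (a0 + (m - j), b0 + j)) * backward_prob (m - j) j
      / weight 0 0 * run1_prob L (a0 + (m - j)) (b0 + j + 1))"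
    unfolding state_prob_eq_backward_prob by (simp add: algebra_simps)
  also have "\<dots> = (\<Sum>j\<le>m. backward_prob (m - j) j / (weight 0 0 * F1 (a0 + (m - j)))
      * run1_prob L (a0 + (m - j)) (b0 + j + 1))"
    unfolding weight_mult_p2 by (simp add: mult.commute)
  finally show ?thesis .
qed

lemma run1_prob_nonneg: "run1_prob L a b \<ge> 0"
  unfolding run1_prob_def by (intro prod_nonneg) (auto intro: p_nonneg)

lemma run1_prob_le_1: "run1_prob L a b \<le> 1"
  unfolding run1_prob_def by (intro prod_le_1) (auto intro: p_nonneg p_le_1)

lemma run1_prob_ge:
  assumes "a \<ge> 1"
  shows "exp (-(F2 b * (\<Sum>k<Suc L. 1 / F1 (a + k)))) \<le> run1_prob L a b"
proof -
  have "exp (-(F2 b * (\<Sum>k<Suc L. 1 / F1 (a + k)))) = exp (\<Sum>k<Suc L. -(F2 b / F1 (a + k)))"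
    by (simp add: sum_distrib_left sum_negf del: sum.lessThan_Suc)
  also have "\<dots> = (\<Prod>k<Suc L. exp (-(F2 b / F1 (a + k))))"
    by (rule exp_sum) simp
  also have "\<dots> \<le> run1_prob L a b"
    unfolding run1_prob_def using assms p1_ge_exp by (intro prod_mono) (auto simp del: One_nat_def)
  finally show ?thesis .
qed

lemma run1_prob_le:
  assumes "mono F1" and a: "a \<ge> 1" and "a \<le> L"
  shows "run1_prob L a b \<le> F1 (2 * a) / (real (Suc a) * F2 b)"
proof -
  let ?x = "F2 b / F1 (2 * a)"
  have f1: "F1 (2 * a) > 0" and f2: "F2 b > 0"
    using F1_pos a F2_pos by auto
  have x_pos: "?x > 0"
    using f1 f2 by simp
  have "run1_prob L a b = (\<Prod>k\<in>{..<Suc L} - {..<Suc a}. p 1 (a + k, b)) * (\<Prod>k<Suc a. p 1 (a + k, b))"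
    unfolding run1_prob_def using assms by (intro prod.subset_diff) auto
  also have "\<dots> \<le> (\<Prod>k<Suc a. p 1 (a + k, b))"
    by (intro mult_left_le_one_le prod_le_1 prod_nonneg) (auto intro: p_nonneg p_le_1)
  also have "\<dots> \<le> (\<Prod>k<Suc a. 1 / (1 + ?x))"
  proof (intro prod_mono conjI)
    fix k assume "k \<in> {..<Suc a}"
    then have "F1 (a + k) \<le> F1 (2 * a)"
      using \<open>mono F1\<close> by (auto simp: mono_def)
    then have "F1 (a + k) * (F1 (2 * a) + F2 b) \<le> F1 (2 * a) * (F1 (a + k) + F2 b)"
      using f2 by (simp add: algebra_simps)
    then show "p 1 (a + k, b) \<le> 1 / (1 + ?x)"
      using f1 f2 F1_nonneg[of "a + k"] by (simp add: urn_p_def field_simps)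
  qed (rule p_nonneg)
  also have "\<dots> = 1 / (1 + ?x) ^ Suc a"
    by (simp add: power_one_over)
  also have "\<dots> \<le> 1 / (real (Suc a) * ?x)"
  proof (rule divide_left_mono)
    have "real (Suc a) * ?x \<le> 1 + real (Suc a) * ?x"
      by simp
    also have "\<dots> \<le> (1 + ?x) ^ Suc a"
      using x_pos by (intro Bernoulli_inequality) simp
    finally show "real (Suc a) * ?x \<le> (1 + ?x) ^ Suc a" .
    show "0 < (1 + ?x) ^ Suc a * (real (Suc a) * ?x)"
      using x_pos by (intro mult_pos_pos zero_less_power) auto
  qed simp
  also have "\<dots> = F1 (2 * a) / (real (Suc a) * F2 b)"
    by simp
  finally show ?thesis .
qed

end

locale power_exp_urn =
  fixes M :: "'a measure" and X :: "'a \<Rightarrow> nat \<Rightarrow> nat \<times> nat"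
    and \<beta>1 \<beta>2 :: real and init :: "nat \<times> nat"
  assumes urn: "polya_urn M (\<lambda>k. real k powr \<beta>1) (\<lambda>k. exp (\<beta>2 * real k)) init X"
    and \<beta>1_gt_1: "\<beta>1 > 1" and \<beta>2_pos: "\<beta>2 > 0"
    and fst_init_ge_1: "fst init \<ge> 1" and snd_init_ge_1: "snd init \<ge> 1"

sublocale power_exp_urn \<subseteq> urn_chain M "\<lambda>k. real k powr \<beta>1" "\<lambda>k. exp (\<beta>2 * real k)" init X
  using urn fst_init_ge_1 snd_init_ge_1 by unfold_locales auto

context power_exp_urn
begin

definition \<sigma> :: real where
  "\<sigma> = min (exp (-(exp (\<beta>2 * real b0) * (\<beta>1 / (\<beta>1 - 1)))))
           (exp (-(real a0 powr \<beta>1 * (1 / (1 - exp (-\<beta>2))))))"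

lemma \<sigma>_pos: "\<sigma> > 0"
  unfolding \<sigma>_def by simp

lemma sum_inverse_powr_le:
  assumes "a \<ge> 1"
  shows "(\<Sum>k<n. 1 / real (a + k) powr \<beta>1) \<le> \<beta>1 / (\<beta>1 - 1) * real a powr (1 - \<beta>1)"
  using sum_shift_powr_neg_le[OF \<beta>1_gt_1, of "real a" n] assms
  by (simp add: powr_minus_divide)

lemma backward_prob_ge_\<sigma>: "\<sigma> \<le> backward_prob i j"
  unfolding \<sigma>_def
proof (rule backward_prob_ge)
  fix n
  have "(\<Sum>k<n. 1 / real (a0 + Suc k) powr \<beta>1) = (\<Sum>k<n. 1 / real (Suc a0 + k) powr \<beta>1)"
    by simp
  also have "\<dots> \<le> \<beta>1 / (\<beta>1 - 1) * real (Suc a0) powr (1 - \<beta>1)"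
    by (rule sum_inverse_powr_le) simp
  also have "\<dots> \<le> \<beta>1 / (\<beta>1 - 1) * 1"
    using \<beta>1_gt_1 powr_mono[of "1 - \<beta>1" 0 "real (Suc a0)"] by (intro mult_left_mono) auto
  finally show "(\<Sum>k<n. 1 / real (a0 + Suc k) powr \<beta>1) \<le> \<beta>1 / (\<beta>1 - 1)"
    by simp
  show "(\<Sum>k<n. 1 / exp (\<beta>2 * real (b0 + Suc k))) \<le> 1 / (1 - exp (-\<beta>2))"
    using sum_exp_neg_le[OF \<beta>2_pos, of "Suc b0" n] by (simp add: exp_minus inverse_eq_divide)
qed

lemma run1_prob_ge_exp_neg_1:
  assumes a: "a \<ge> 1" and small: "exp (\<beta>2 * real b) * (\<beta>1 / (\<beta>1 - 1) * real a powr (1 - \<beta>1)) \<le> 1"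
  shows "exp (-1) \<le> run1_prob L a b"
proof -
  have "exp (\<beta>2 * real b) * (\<Sum>k<Suc L. 1 / real (a + k) powr \<beta>1) \<le> 1"
    using sum_inverse_powr_le[OF a, of "Suc L"] small
    by (meson exp_gt_zero less_imp_le mult_left_mono order.trans)
  then have "exp (-1) \<le> exp (-(exp (\<beta>2 * real b) * (\<Sum>k<Suc L. 1 / real (a + k) powr \<beta>1)))"
    by simp
  also have "\<dots> \<le> run1_prob L a b"
    using run1_prob_ge[OF a] by simp
  finally show ?thesis .
qed

lemma run1_prob_div_powr_le:
  assumes a: "a \<ge> 1" "a \<le> N"
  shows "run1_prob N a c / real a powr \<beta>1 \<le> 2 powr \<beta>1 / (real (Suc a) * exp (\<beta>2 * real c))"
proof -
  have F1: "real a powr \<beta>1 > 0"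
    using a by simp
  have "mono (\<lambda>k. real k powr \<beta>1)"
    using \<beta>1_gt_1 by (intro monoI powr_mono2) auto
  then have "run1_prob N a c \<le> real (2 * a) powr \<beta>1 / (real (Suc a) * exp (\<beta>2 * real c))"
    using run1_prob_le[of a N c] a by simp
  also have "real (2 * a) powr \<beta>1 = 2 powr \<beta>1 * real a powr \<beta>1"
    by (simp add: powr_mult)
  finally have "run1_prob N a c / real a powr \<beta>1
      \<le> (2 powr \<beta>1 * real a powr \<beta>1 / (real (Suc a) * exp (\<beta>2 * real c))) / real a powr \<beta>1"
    using F1 by (intro divide_right_mono) auto
  then show ?thesis
    using F1 by simp
qed

text \<open>
  If \<open>a \<ge> N/2\<close> both bounds on \<open>run1_prob\<close> are used; otherwise \<open>c \<ge> N/2\<close> and the term is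
  exponentially small.\<close>
lemma run1_prob_div_le:
  assumes a: "a \<ge> 1" "a \<le> N" and c: "a + c = Suc N"
  shows "run1_prob N a c / real a powr \<beta>1
    \<le> 2 powr \<beta>1 * (real N powr (-\<beta>1) * min 1 (2 * real N powr (\<beta>1 - 1) * exp (-(\<beta>2 * real c))))
      + 2 powr \<beta>1 * exp (-(\<beta>2 * real N / 2))"
proof -
  let ?q = "run1_prob N a c" and ?F1 = "real a powr \<beta>1"
  let ?y = "2 * real N powr (\<beta>1 - 1) * exp (-(\<beta>2 * real c))"
  have F1: "?F1 > 0" and N: "real N \<ge> 1"
    using a by auto
  have q_le_run: "?q / ?F1 \<le> 2 powr \<beta>1 / (real (Suc a) * exp (\<beta>2 * real c))"
    using run1_prob_div_powr_le[OF a] .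
  have q_le_1: "?q / ?F1 \<le> 1 / ?F1"
    using run1_prob_le_1[of N a c] F1 by (intro divide_right_mono) auto
  show ?thesis
  proof (cases "N \<le> 2 * a")
    case True
    have "real N powr \<beta>1 \<le> (2 * real a) powr \<beta>1"
      using True \<beta>1_gt_1 by (intro powr_mono2) auto
    then have "1 / ?F1 \<le> 2 powr \<beta>1 * (real N powr (-\<beta>1) * 1)"
      using F1 N by (simp add: powr_mult powr_minus_divide field_simps)
    moreover have "2 powr \<beta>1 / (real (Suc a) * exp (\<beta>2 * real c)) \<le> 2 powr \<beta>1 * (real N powr (-\<beta>1) * ?y)"
    proof -
      have "2 powr \<beta>1 / (real (Suc a) * exp (\<beta>2 * real c))
          = 2 powr \<beta>1 * (1 / real (Suc a)) * exp (-(\<beta>2 * real c))"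
        by (simp add: exp_minus field_simps)
      also have "\<dots> \<le> 2 powr \<beta>1 * (2 / real N) * exp (-(\<beta>2 * real c))"
        using True N by (intro mult_right_mono mult_left_mono) (auto simp: field_simps)
      also have "\<dots> = 2 powr \<beta>1 * ((real N powr (-\<beta>1) * real N powr (\<beta>1 - 1)) * 2 * exp (-(\<beta>2 * real c)))"
        using powr_neg_mult_powr_diff_1[of "real N" \<beta>1] N by simp
      also have "\<dots> = 2 powr \<beta>1 * (real N powr (-\<beta>1) * ?y)"
        by (simp only: mult_ac)
      finally show ?thesis .
    qed
    ultimately have "?q / ?F1 \<le> min (2 powr \<beta>1 * (real N powr (-\<beta>1) * 1)) (2 powr \<beta>1 * (real N powr (-\<beta>1) * ?y))"
      using q_le_1 q_le_run by (intro min.boundedI) linarith+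
    also have "\<dots> = 2 powr \<beta>1 * (real N powr (-\<beta>1) * min 1 ?y)"
      by (simp add: min_mult_distrib_left)
    finally show ?thesis
      by (rule add_increasing2[rotated]) simp
  next
    case False
    then have "real N / 2 \<le> real c"
      using c by simp
    have "exp (\<beta>2 * real c) \<le> real (Suc a) * exp (\<beta>2 * real c)"
      using mult_right_mono[of 1 "real (Suc a)" "exp (\<beta>2 * real c)"] by simp
    then have "2 powr \<beta>1 / (real (Suc a) * exp (\<beta>2 * real c)) \<le> 2 powr \<beta>1 / exp (\<beta>2 * real c)"
      by (intro divide_left_mono) (simp_all add: zero_less_mult_iff)
    with q_le_run have "?q / ?F1 \<le> 2 powr \<beta>1 / exp (\<beta>2 * real c)"
      by (rule order.trans)
    also have "\<dots> = 2 powr \<beta>1 * exp (-(\<beta>2 * real c))"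
      by (simp add: exp_minus inverse_eq_divide)
    also have "\<dots> \<le> 2 powr \<beta>1 * exp (-(\<beta>2 * real N / 2))"
      using mult_left_mono[OF \<open>real N / 2 \<le> real c\<close>, of \<beta>2] \<beta>2_pos by simp
    finally show ?thesis
      by (rule add_increasing[rotated]) simp
  qed
qed

lemma measure_last2_le_bound:
  fixes m :: nat
  defines "N \<equiv> a0 + b0 + m"
  shows "measure M (last2 m)
    \<le> (2 powr \<beta>1 * real N powr (-\<beta>1) * (ln (2 * real N powr (\<beta>1 - 1)) / \<beta>2 + 1 + 1 / (1 - exp (-\<beta>2)))
       + real (Suc m) * (2 powr \<beta>1 * exp (-(\<beta>2 * real N / 2)))) / weight 0 0"
proof -
  let ?A = "2 * real N powr (\<beta>1 - 1)"
  let ?B = "\<lambda>j. 2 powr \<beta>1 * (real N powr (-\<beta>1) * min 1 (?A * exp (-(\<beta>2 * real (b0 + j + 1)))))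
    + 2 powr \<beta>1 * exp (-(\<beta>2 * real N / 2))"
  have w: "weight 0 0 > 0"
    by (rule weight_pos)
  have "real N \<ge> 1"
    unfolding N_def using a0_ge_1 by simp
  then have A: "?A \<ge> 1"
    using \<beta>1_gt_1 ge_one_powr_ge_zero[of "real N" "\<beta>1 - 1"] by simp
  have "measure M (last2 m) \<le> measure M (last2_upto m N)"
    by (rule measure_last2_le)
  also have "\<dots> = (\<Sum>j\<le>m. backward_prob (m - j) j / (weight 0 0 * real (a0 + (m - j)) powr \<beta>1)
      * run1_prob N (a0 + (m - j)) (b0 + j + 1))"
    by (rule measure_last2_upto)
  also have "\<dots> \<le> (\<Sum>j\<le>m. ?B j / weight 0 0)"
  proof (intro sum_mono)
    fix j assume j: "j \<in> {..m}"
    let ?a = "a0 + (m - j)" and ?c = "b0 + j + 1"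
    have "backward_prob (m - j) j / (weight 0 0 * real ?a powr \<beta>1) * run1_prob N ?a ?c
        \<le> 1 / (weight 0 0 * real ?a powr \<beta>1) * run1_prob N ?a ?c"
      using backward_prob_bounds[of "m - j" j] run1_prob_nonneg[of N ?a ?c] w a0_ge_1
      by (intro mult_right_mono divide_right_mono) auto
    also have "\<dots> = (run1_prob N ?a ?c / real ?a powr \<beta>1) / weight 0 0"
      by simp
    also have "\<dots> \<le> ?B j / weight 0 0"
      using run1_prob_div_le[of ?a N ?c] j w a0_ge_1 by (intro divide_right_mono) (auto simp: N_def)
    finally show "backward_prob (m - j) j / (weight 0 0 * real ?a powr \<beta>1) * run1_prob N ?a ?c \<le> ?B j / weight 0 0" .
  qed
  also have "\<dots> = (\<Sum>j\<le>m. ?B j) / weight 0 0"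
    by (simp add: sum_divide_distrib)
  also have "(\<Sum>j\<le>m. ?B j) = 2 powr \<beta>1 * real N powr (-\<beta>1) * (\<Sum>j\<le>m. min 1 (?A * exp (-(\<beta>2 * real (b0 + j + 1)))))
      + real (Suc m) * (2 powr \<beta>1 * exp (-(\<beta>2 * real N / 2)))"
    by (simp add: sum.distrib sum_distrib_left mult.assoc)
  also have "(\<Sum>j\<le>m. min 1 (?A * exp (-(\<beta>2 * real (b0 + j + 1))))) \<le> (\<Sum>j<Suc m. min 1 (?A * exp (-(\<beta>2 * real j))))"
    unfolding lessThan_Suc_atMost using A \<beta>2_pos by (intro sum_mono min.mono mult_left_mono) auto
  also have "\<dots> \<le> ln ?A / \<beta>2 + 1 + 1 / (1 - exp (-\<beta>2))"
    by (rule sum_min_1_exp_le[OF A \<beta>2_pos])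
  finally show ?thesis
    using w by (simp add: divide_right_mono mult_left_mono)
qed

lemma measure_last2_ge_bound:
  fixes m J :: nat
  defines "N \<equiv> a0 + b0 + m"
  assumes "J \<le> m"
    and small: "\<And>j. j \<le> J \<Longrightarrow>
      exp (\<beta>2 * real (b0 + j + 1)) * (\<beta>1 / (\<beta>1 - 1) * real (a0 + (m - j)) powr (1 - \<beta>1)) \<le> 1"
  shows "\<sigma> / weight 0 0 * real (Suc J) * real N powr (-\<beta>1) * exp (-1) \<le> measure M (last2 m)"
proof (rule measure_last2_ge)
  fix L
  let ?T = "\<lambda>j. backward_prob (m - j) j / (weight 0 0 * real (a0 + (m - j)) powr \<beta>1)
    * run1_prob L (a0 + (m - j)) (b0 + j + 1)"
  let ?c = "\<sigma> / weight 0 0 * real N powr (-\<beta>1) * exp (-1)"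
  have w: "weight 0 0 > 0"
    by (rule weight_pos)
  have T_nonneg: "?T j \<ge> 0" for j
    using backward_prob_bounds[of "m - j" j] run1_prob_nonneg[of L] w a0_ge_1 by simp
  have T_ge: "?c \<le> ?T j" if j: "j \<le> J" for j
  proof -
    let ?a = "a0 + (m - j)"
    have a: "?a \<ge> 1"
      using a0_ge_1 by simp
    have "real N powr (-\<beta>1) \<le> 1 / real ?a powr \<beta>1"
      using a \<beta>1_gt_1 by (simp add: N_def powr_minus_divide divide_left_mono powr_mono2)
    moreover have "\<sigma> / weight 0 0 \<le> backward_prob (m - j) j / weight 0 0"
      using backward_prob_ge_\<sigma> w by (intro divide_right_mono) auto
    moreover have "exp (-1) \<le> run1_prob L ?a (b0 + j + 1)"
      using run1_prob_ge_exp_neg_1[OF a small[OF j]] .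
    ultimately have "?c \<le> backward_prob (m - j) j / weight 0 0 * (1 / real ?a powr \<beta>1) * run1_prob L ?a (b0 + j + 1)"
      using \<sigma>_pos w backward_prob_bounds[of "m - j" j] by (intro mult_mono) auto
    then show ?thesis
      by simp
  qed
  have "?c * real (Suc J) = (\<Sum>j\<le>J. ?c)"
    by simp
  also have "\<dots> \<le> (\<Sum>j\<le>J. ?T j)"
    using T_ge by (intro sum_mono) auto
  also have "\<dots> \<le> (\<Sum>j\<le>m. ?T j)"
    using \<open>J \<le> m\<close> by (intro sum_mono2 T_nonneg) auto
  also have "\<dots> = measure M (last2_upto m L)"
    by (rule measure_last2_upto[symmetric])
  finally show "\<sigma> / weight 0 0 * real (Suc J) * real N powr (-\<beta>1) * exp (-1) \<le> measure M (last2_upto m L)"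
    by (simp add: mult_ac)
qed

lemma run1_exponent_le_1:
  fixes N j a :: nat
  defines "\<gamma> \<equiv> (\<beta>1 - 1) / (2 * \<beta>2)"
  assumes N: "N \<ge> 1" and j: "real j \<le> \<gamma> * ln (real N)" and a: "real N / 2 \<le> real a"
    and N_large: "exp (\<beta>2 * (real b0 + 1)) * (\<beta>1 / (\<beta>1 - 1)) * 2 powr (\<beta>1 - 1) * real N powr ((1 - \<beta>1) / 2) \<le> 1"
  shows "exp (\<beta>2 * real (b0 + j + 1)) * (\<beta>1 / (\<beta>1 - 1) * real a powr (1 - \<beta>1)) \<le> 1"
proof -
  have "real a powr (1 - \<beta>1) \<le> (real N / 2) powr (1 - \<beta>1)"
    using N a \<beta>1_gt_1 by (intro powr_mono2') auto
  also have "\<dots> = 2 powr (\<beta>1 - 1) * real N powr (1 - \<beta>1)"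
    using N by (simp add: powr_divide powr_minus_divide divide_simps powr_add[symmetric])
  finally have a_powr: "real a powr (1 - \<beta>1) \<le> 2 powr (\<beta>1 - 1) * real N powr (1 - \<beta>1)" .
  have "exp (\<beta>2 * real (b0 + j + 1)) = exp (\<beta>2 * (real b0 + 1)) * exp (\<beta>2 * real j)"
    by (simp add: exp_add[symmetric] algebra_simps)
  also have "exp (\<beta>2 * real j) \<le> exp (\<beta>2 * (\<gamma> * ln (real N)))"
    using j \<beta>2_pos by simp
  also have "exp (\<beta>2 * (\<gamma> * ln (real N))) = real N powr ((\<beta>1 - 1) / 2)"
    unfolding \<gamma>_def using N \<beta>2_pos by (simp add: powr_def field_simps)
  finally have exp_le: "exp (\<beta>2 * real (b0 + j + 1)) \<le> exp (\<beta>2 * (real b0 + 1)) * real N powr ((\<beta>1 - 1) / 2)"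
    by simp
  have "exp (\<beta>2 * real (b0 + j + 1)) * (\<beta>1 / (\<beta>1 - 1) * real a powr (1 - \<beta>1))
      \<le> (exp (\<beta>2 * (real b0 + 1)) * real N powr ((\<beta>1 - 1) / 2))
        * (\<beta>1 / (\<beta>1 - 1) * (2 powr (\<beta>1 - 1) * real N powr (1 - \<beta>1)))"
    using exp_le a_powr \<beta>1_gt_1 by (intro mult_mono mult_left_mono) auto
  also have "\<dots> = exp (\<beta>2 * (real b0 + 1)) * (\<beta>1 / (\<beta>1 - 1)) * 2 powr (\<beta>1 - 1)
      * (real N powr ((\<beta>1 - 1) / 2) * real N powr (1 - \<beta>1))"
    by (simp add: mult_ac)
  also have "real N powr ((\<beta>1 - 1) / 2) * real N powr (1 - \<beta>1) = real N powr ((1 - \<beta>1) / 2)"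
    by (simp add: powr_add[symmetric] field_simps)
  finally show ?thesis
    using N_large by simp
qed

text \<open>
  With \<open>J = \<lfloor>\<gamma> ln N\<rfloor>\<close>, every \<open>j \<le> J\<close> satisfies \<open>e\<^sup>\<beta>\<^sup>2\<^sup>j \<le> N\<^sup>(\<^sup>\<beta>\<^sup>1\<^sup>-\<^sup>1\<^sup>)\<^sup>/\<^sup>2\<close> while the
  corresponding \<open>a\<close> is at least \<open>N/2\<close>, so the runs of agent 1 from these states are likely.\<close>
lemma measure_last2_ge_ln:
  fixes m :: nat
  defines "N \<equiv> a0 + b0 + m" and "\<gamma> \<equiv> (\<beta>1 - 1) / (2 * \<beta>2)"
  assumes J_small: "\<gamma> * ln (real N) + real (a0 + b0) \<le> real N / 2"
    and N_large: "exp (\<beta>2 * (real b0 + 1)) * (\<beta>1 / (\<beta>1 - 1)) * 2 powr (\<beta>1 - 1) * real N powr ((1 - \<beta>1) / 2) \<le> 1"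
  shows "\<sigma> / weight 0 0 * (\<gamma> * ln (real N)) * real N powr (-\<beta>1) * exp (-1) \<le> measure M (last2 m)"
proof -
  define J where "J = nat \<lfloor>\<gamma> * ln (real N)\<rfloor>"
  have N: "N \<ge> 1"
    unfolding N_def using a0_ge_1 by simp
  have "\<gamma> > 0"
    unfolding \<gamma>_def using \<beta>1_gt_1 \<beta>2_pos by simp
  then have \<gamma>_ln: "\<gamma> * ln (real N) \<ge> 0"
    using N by simp
  have J_le: "real J \<le> \<gamma> * ln (real N)"
    unfolding J_def using \<gamma>_ln by simp
  have J_ge: "\<gamma> * ln (real N) \<le> real (Suc J)"
    unfolding J_def using \<gamma>_ln by linarith
  have "J \<le> m"
    using J_le J_small N unfolding N_def by simp
  have "exp (\<beta>2 * real (b0 + j + 1)) * (\<beta>1 / (\<beta>1 - 1) * real (a0 + (m - j)) powr (1 - \<beta>1)) \<le> 1"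
    if "j \<le> J" for j
  proof (rule run1_exponent_le_1[OF N _ _ N_large[unfolded \<gamma>_def]])
    show "real j \<le> (\<beta>1 - 1) / (2 * \<beta>2) * ln (real N)"
      using that J_le unfolding \<gamma>_def by linarith
    have "real (a0 + (m - j)) = real N - real b0 - real j"
      using that \<open>J \<le> m\<close> unfolding N_def by simp
    then show "real N / 2 \<le> real (a0 + (m - j))"
      using that J_le J_small by simp
  qed
  then have "\<sigma> / weight 0 0 * real (Suc J) * real N powr (-\<beta>1) * exp (-1) \<le> measure M (last2 m)"
    unfolding N_def by (intro measure_last2_ge_bound[OF \<open>J \<le> m\<close>])
  moreover have "\<sigma> / weight 0 0 * (\<gamma> * ln (real N)) * real N powr (-\<beta>1) * exp (-1)
      \<le> \<sigma> / weight 0 0 * real (Suc J) * real N powr (-\<beta>1) * exp (-1)"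
    using J_ge \<sigma>_pos weight_pos[of 0 0] by (intro mult_right_mono mult_left_mono) auto
  ultimately show ?thesis
    by linarith
qed

lemma measure_last2_bigo: "(\<lambda>m. measure M (last2 m)) \<in> O(\<lambda>m. real m powr (-\<beta>1) * ln (real m))"
proof -
  define d where "d = real (a0 + b0)"
  define w where "w = weight 0 0"
  have d: "d \<ge> 2" and w: "w > 0"
    using a0_ge_1 b0_ge_1 weight_pos by (auto simp: d_def w_def)
  define U where "U m = (2 powr \<beta>1 * (real m + d) powr (-\<beta>1) * (ln (2 * (real m + d) powr (\<beta>1 - 1)) / \<beta>2
    + 1 + 1 / (1 - exp (-\<beta>2))) + (real m + 1) * (2 powr \<beta>1 * exp (-(\<beta>2 * (real m + d) / 2)))) / w" for m
  have "(\<lambda>m. measure M (last2 m)) \<in> O(U)"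
  proof (rule landau_o.big_mono, intro always_eventually allI)
    fix m
    have "measure M (last2 m) \<le> U m"
      using measure_last2_le_bound[of m] unfolding U_def w_def d_def by (simp add: add.commute)
    then show "norm (measure M (last2 m)) \<le> norm (U m)"
      by simp
  qed
  also have "U \<in> O(\<lambda>m. real m powr (-\<beta>1) * ln (real m))"
    unfolding U_def using \<beta>1_gt_1 \<beta>2_pos d w by real_asymp
  finally show ?thesis .
qed

lemma eventually_measure_last2_ge:
  "eventually (\<lambda>m. \<sigma> / weight 0 0 * ((\<beta>1 - 1) / (2 * \<beta>2) * ln (real m + real (a0 + b0)))
     * (real m + real (a0 + b0)) powr (-\<beta>1) * exp (-1) \<le> measure M (last2 m)) at_top"
proof -
  define d where "d = real (a0 + b0)"
  define \<gamma> where "\<gamma> = (\<beta>1 - 1) / (2 * \<beta>2)"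
  define K where "K = exp (\<beta>2 * (real b0 + 1)) * (\<beta>1 / (\<beta>1 - 1)) * 2 powr (\<beta>1 - 1)"
  have \<gamma>: "\<gamma> > 0" and K: "K > 0"
    using \<beta>1_gt_1 \<beta>2_pos by (auto simp: \<gamma>_def K_def)
  have "eventually (\<lambda>m. \<gamma> * ln (real m + d) + d \<le> (real m + d) / 2) at_top"
    using \<gamma> by real_asymp
  moreover have "eventually (\<lambda>m. K * (real m + d) powr ((1 - \<beta>1) / 2) \<le> 1) at_top"
    using \<beta>1_gt_1 K by real_asymp
  ultimately show ?thesis
  proof eventually_elim
    case (elim m)
    then show ?case
      using measure_last2_ge_ln[of m] unfolding \<gamma>_def K_def d_def by (simp add: add.commute)
  qed
qed

lemma measure_last2_bigomega: "(\<lambda>m. measure M (last2 m)) \<in> \<Omega>(\<lambda>m. real m powr (-\<beta>1) * ln (real m))"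
proof -
  define d where "d = real (a0 + b0)"
  define c where "c = \<sigma> / weight 0 0 * ((\<beta>1 - 1) / (2 * \<beta>2)) * exp (-1)"
  have d: "d \<ge> 2" and c: "c > 0"
    using a0_ge_1 b0_ge_1 weight_pos[of 0 0] \<sigma>_pos \<beta>1_gt_1 \<beta>2_pos by (auto simp: d_def c_def)
  have "(\<lambda>m. measure M (last2 m)) \<in> \<Omega>(\<lambda>m. c * ln (real m + d) * (real m + d) powr (-\<beta>1))"
  proof (rule landau_omega.big_mono)
    show "\<forall>\<^sub>F m in sequentially. norm (c * ln (real m + d) * (real m + d) powr (-\<beta>1)) \<le> norm (measure M (last2 m))"
      using eventually_measure_last2_ge
    proof eventually_elim
      case (elim m)
      have "c * ln (real m + d) * (real m + d) powr (-\<beta>1) \<le> measure M (last2 m)"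
        using elim unfolding c_def d_def by (simp add: mult_ac)
      moreover have "c * ln (real m + d) * (real m + d) powr (-\<beta>1) \<ge> 0"
        using c d by simp
      ultimately show ?case
        by simp
    qed
  qed
  also have "(\<lambda>m. c * ln (real m + d) * (real m + d) powr (-\<beta>1)) \<in> \<Omega>(\<lambda>m. real m powr (-\<beta>1) * ln (real m))"
    using c d \<beta>1_gt_1 by real_asymp
  finally show ?thesis .
qed

lemma prob_sMon1_pos: "prob (sMon1 M X) > 0"
proof -
  define d where "d = real (a0 + b0)"
  obtain m where m: "\<sigma> / weight 0 0 * ((\<beta>1 - 1) / (2 * \<beta>2) * ln (real m + d))
      * (real m + d) powr (-\<beta>1) * exp (-1) \<le> measure M (last2 m)"
    using eventually_happens[OF eventually_measure_last2_ge] unfolding d_def by auto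
  have "d \<ge> 2"
    using a0_ge_1 b0_ge_1 by (simp add: d_def)
  then have "0 < \<sigma> / weight 0 0 * ((\<beta>1 - 1) / (2 * \<beta>2) * ln (real m + d)) * (real m + d) powr (-\<beta>1) * exp (-1)"
    using \<sigma>_pos weight_pos[of 0 0] \<beta>1_gt_1 \<beta>2_pos by simp
  also note m
  also have "last2 m \<subseteq> sMon1 M X"
    using Nmon_eq_inter_sMon1[of m] by blast
  then have "measure M (last2 m) \<le> prob (sMon1 M X)"
    by (intro finite_measure_mono) simp_all
  finally show ?thesis .
qed

theorem cprob_Nmon_eq_bigtheta:
  "(\<lambda>n. cprob M (Nmon_eq M X n) (sMon1 M X)) \<in> \<Theta>(\<lambda>n. real n powr (-\<beta>1) * ln (real n))"
proof (rule bigtheta_powr_ln_shift[where k = 2])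
  have "(\<lambda>m. cprob M (Nmon_eq M X (m + 2)) (sMon1 M X)) = (\<lambda>m. measure M (last2 m) / prob (sMon1 M X))"
    using Nmon_eq_inter_sMon1 by (simp add: cprob_def)
  moreover have "(\<lambda>m. measure M (last2 m)) \<in> \<Theta>(\<lambda>m. real m powr (-\<beta>1) * ln (real m))"
    using measure_last2_bigo measure_last2_bigomega by (rule bigthetaI)
  ultimately show "(\<lambda>m. cprob M (Nmon_eq M X (m + 2)) (sMon1 M X)) \<in> \<Theta>(\<lambda>m. real m powr (-\<beta>1) * ln (real m))"
    using prob_sMon1_pos by simp
qed

end

theorem proposition5:
  fixes M :: "'a measure" and X :: "'a \<Rightarrow> nat \<Rightarrow> nat \<times> nat"
    and \<beta>1 \<beta>2 :: real and x0 :: "nat \<times> nat"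
  assumes "\<beta>1 > 1" and "\<beta>2 > 0"
    and "fst x0 \<ge> 1" and "snd x0 \<ge> 1"
    and "polya_urn M (\<lambda>k. real k powr \<beta>1) (\<lambda>k. exp (\<beta>2 * real k)) x0 X"
  shows "(\<lambda>n. cprob M (Nmon_eq M X n) (sMon1 M X))
           \<in> \<Theta>(\<lambda>n. real n powr (- \<beta>1) * ln (real n))"
proof -
  interpret power_exp_urn M X \<beta>1 \<beta>2 x0
    using assms by unfold_locales
  show ?thesis
    by (rule cprob_Nmon_eq_bigtheta)
qed

end
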